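(* The fine transition function $\phi:\mathrm{Conf}\to\mathrm{Conf}$ is the left Kan extension of the fully shifted sub-local transition function $\underline{\delta}:\mathrm{Sub}\to\mathrm{Conf}$ along the (monotonic) projection $\pi_2:\mathrm{Sub}\to\mathrm{Conf}$, $\pi_2(g,c)=c$. That is, $\underline{\delta}\Rightarrow\phi\circ\pi_2$, and for every monotonic $f:\mathrm{Conf}\to\mathrm{Conf}$ with $\underline{\delta}\Rightarrow f\circ\pi_2$ we have $\phi\Rightarrow f$.
   Context: A cellular automaton is given by a group $G$, a neighborhood $N\subseteq G$ (not necessarily finite), a finite set of states $Q$ and $\delta:Q^N\to Q$. $\mathrm{Conf}$ is the set of partial functions $G\to Q$ with support $|c|$; $c\restriction S$ is restriction to $S\cap|c|$; $\mathrm{Conf}$ is partially ordered by $c\preceq c'$ iff for all $g\in|c|$, $g\in|c'|$ and $c(g)=c'(g)$. For $c\in\mathrm{Conf}$, $g\in G$, $c\blacktriangleleft g$ has support $\{h\mid g\cdot h\in|c|\}$ and $(c\blacktriangleleft g)(h)=c(g\cdot h)$. $g\cdot M=\{g\cdot m\mid m\in M\}$. $c_g=c\restriction(g\cdot N\cap|c|)$; $\det(c)=\{g\in G\mid \exists q\in Q\ \forall c'\in Q^{g\cdot N}:\ c'\restriction|c_g|=c_g\implies \delta(c'\blacktriangleleft g)=q\}$ and $q_{c,g}$ is the unique such $q$. The fine transition function $\phi$ has $|\phi(c)|=\det(c)$ and $\phi(c)(g)=q_{c,g}$. $\mathrm{Sub}=\bigcup_{g\in G,\,M\subseteq N}(\{g\}\times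 Q^{g\cdot M})$ ordered by $(g,c)\preceq(g',c')$ iff $g=g'$ and $c\preceq c'$; $\underline{\delta}(g,c)$ is the configuration with support $\{g\}\cap\det(c)$ and, if $g\in\det(c)$, value $q_{c,g}$ at $g$. For posets $X,Y$, $f:X\to Y$ is monotonic if $x\preceq x'\Rightarrow f(x)\preceq f(x')$; for monotonic $f,f'$, $f\Rightarrow f'$ iff $f(x)\preceq f'(x)$ for all $x$. Given posets $A,B,C$ and monotonic $i:A\to B$, $f:A\to C$, a monotonic $g:B\to C$ is the left Kan extension of $f$ along $i$ if it is the $\Rightarrow$-minimum of $\{h:B\to C\text{ monotonic}\mid f\Rightarrow h\circ i\}$. *)

theory Defs
  imports Main
begin

text \<open>The group G is a type of class group_add (group operation written +,
  not assumed commutative). Configurations are partial maps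
  'g \<rightharpoonup> 'q; the support is dom, the order is map_le. Elements of Q^N are
  maps with domain exactly N; the local rule delta is a function on maps and is
  only ever applied to maps with domain N.\<close>

definition lshift :: "'g::group_add set \<Rightarrow> 'g \<Rightarrow> 'g set" where
  "lshift M g = (\<lambda>m. g + m) ` M"

definition conf_shift :: "('g::group_add \<rightharpoonup> 'q) \<Rightarrow> 'g \<Rightarrow> ('g \<rightharpoonup> 'q)" where
  "conf_shift c g = (\<lambda>h. c (g + h))"

definition local_conf :: "'g::group_add set \<Rightarrow> ('g \<rightharpoonup> 'q) \<Rightarrow> 'g \<Rightarrow> ('g \<rightharpoonup> 'q)" where
  "local_conf N c g = c |` (lshift N g \<inter> dom c)"

definition determines :: "'g::group_add set \<Rightarrow> (('g \<rightharpoonup> 'q) \<Rightarrow> 'q) \<Rightarrow> ('g \<rightharpoonup> 'q) \<Rightarrow> 'g \<Rightarrow> 'q \<Rightarrow> bool" where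
  "determines N \<delta> c g q \<longleftrightarrow>
     (\<forall>c'. dom c' = lshift N g \<longrightarrow> c' |` dom (local_conf N c g) = local_conf N c g
            \<longrightarrow> \<delta> (conf_shift c' g) = q)"

definition det :: "'g::group_add set \<Rightarrow> (('g \<rightharpoonup> 'q) \<Rightarrow> 'q) \<Rightarrow> ('g \<rightharpoonup> 'q) \<Rightarrow> 'g set" where
  "det N \<delta> c = {g. \<exists>q. determines N \<delta> c g q}"

definition det_val :: "'g::group_add set \<Rightarrow> (('g \<rightharpoonup> 'q) \<Rightarrow> 'q) \<Rightarrow> ('g \<rightharpoonup> 'q) \<Rightarrow> 'g \<Rightarrow> 'q" where
  "det_val N \<delta> c g = (THE q. determines N \<delta> c g q)"

definition fine_trans :: "'g::group_add set \<Rightarrow> (('g \<rightharpoonup> 'q) \<Rightarrow> 'q) \<Rightarrow> ('g \<rightharpoonup> 'q) \<Rightarrow> ('g \<rightharpoonup> 'q)" where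
  "fine_trans N \<delta> c = (\<lambda>g. if g \<in> det N \<delta> c then Some (det_val N \<delta> c g) else None)"

definition Sub :: "'g::group_add set \<Rightarrow> ('g \<times> ('g \<rightharpoonup> 'q)) set" where
  "Sub N = {(g, c). \<exists>M. M \<subseteq> N \<and> dom c = lshift M g}"

definition sub_le :: "('g \<times> ('g \<rightharpoonup> 'q)) \<Rightarrow> ('g \<times> ('g \<rightharpoonup> 'q)) \<Rightarrow> bool" where
  "sub_le x y \<longleftrightarrow> fst x = fst y \<and> snd x \<subseteq>\<^sub>m snd y"

definition sub_delta :: "'g::group_add set \<Rightarrow> (('g \<rightharpoonup> 'q) \<Rightarrow> 'q) \<Rightarrow> ('g \<times> ('g \<rightharpoonup> 'q)) \<Rightarrow> ('g \<rightharpoonup> 'q)" where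
  "sub_delta N \<delta> x = (\<lambda>h. if h = fst x \<and> fst x \<in> det N \<delta> (snd x)
                          then Some (det_val N \<delta> (snd x) (fst x)) else None)"

definition is_left_Kan_ext ::
  "'a set \<Rightarrow> ('a \<Rightarrow> 'a \<Rightarrow> bool) \<Rightarrow> 'b set \<Rightarrow> ('b \<Rightarrow> 'b \<Rightarrow> bool) \<Rightarrow> 'c set \<Rightarrow> ('c \<Rightarrow> 'c \<Rightarrow> bool)
   \<Rightarrow> ('a \<Rightarrow> 'b) \<Rightarrow> ('a \<Rightarrow> 'c) \<Rightarrow> ('b \<Rightarrow> 'c) \<Rightarrow> bool" where
  "is_left_Kan_ext A leA B leB C leC i f g \<longleftrightarrow>
     i ` A \<subseteq> B \<and> monotone_on A leA leB i \<and>
     f ` A \<subseteq> C \<and> monotone_on A leA leC f \<and>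
     g ` B \<subseteq> C \<and> monotone_on B leB leC g \<and>
     (\<forall>a\<in>A. leC (f a) (g (i a))) \<and>
     (\<forall>h. h ` B \<subseteq> C \<and> monotone_on B leB leC h \<and> (\<forall>a\<in>A. leC (f a) (h (i a)))
          \<longrightarrow> (\<forall>b\<in>B. leC (g b) (h b)))"

end

theory Submission
  imports Defs
begin

text \<open>Whether a cell g is determined by c, and with which state, depends only
  on c restricted to g + N, and monotonically so. Hence the value of phi(c) at g is
  that of the sub-local rule at (g, c restricted to g + N), an element of Sub whose
  projection lies below c; so every monotonic f lying above the sub-local rule
  along the projection lies above phi.\<close>

lemma map_leI: "(\<And>x v. m x = Some v \<Longrightarrow> m' x = Some v) \<Longrightarrow> m \<subseteq>\<^sub>m m'"
  unfolding map_le_def by force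

lemma map_le_SomeD: "m \<subseteq>\<^sub>m m' \<Longrightarrow> m x = Some v \<Longrightarrow> m' x = Some v"
  unfolding map_le_def by force

lemma restrict_dom_eq_iff_map_le: "m |` dom m' = m' \<longleftrightarrow> m' \<subseteq>\<^sub>m m"
  unfolding map_le_def restrict_map_def by (auto simp: fun_eq_iff dom_def)

lemma local_conf_map_le: "local_conf N c g \<subseteq>\<^sub>m c"
  unfolding local_conf_def map_le_def by simp

lemma local_conf_mono: "c \<subseteq>\<^sub>m c' \<Longrightarrow> local_conf N c g \<subseteq>\<^sub>m local_conf N c' g"
  unfolding local_conf_def map_le_def restrict_map_def by (auto simp: dom_def)

lemma local_conf_idem: "local_conf N (local_conf N c g) g = local_conf N c g"
  unfolding local_conf_def by (rule ext) (simp add: restrict_map_def dom_def)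

lemma dom_local_conf: "dom (local_conf N c g) = lshift {m \<in> N. g + m \<in> dom c} g"
  unfolding local_conf_def lshift_def by auto

lemma local_conf_in_Sub: "(g, local_conf N c g) \<in> Sub N"
  unfolding Sub_def by (auto intro!: exI[of _ "{m \<in> N. g + m \<in> dom c}"] simp: dom_local_conf)

lemma determines_mono:
  assumes "c \<subseteq>\<^sub>m c'" and "determines N \<delta> c g q"
  shows "determines N \<delta> c' g q"
  unfolding determines_def
proof (intro allI impI)
  fix d
  assume dom_d: "dom d = lshift N g"
    and ext': "d |` dom (local_conf N c' g) = local_conf N c' g"
  have "local_conf N c g \<subseteq>\<^sub>m local_conf N c' g"
    using assms(1) by (rule local_conf_mono)
  also have "local_conf N c' g \<subseteq>\<^sub>m d"
    using ext' by (simp add: restrict_dom_eq_iff_map_le)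
  finally have "d |` dom (local_conf N c g) = local_conf N c g"
    by (simp add: restrict_dom_eq_iff_map_le)
  then show "\<delta> (conf_shift d g) = q"
    using assms(2) dom_d unfolding determines_def by blast
qed

text \<open>Uniqueness needs some completion of the local configuration to all of
  g + N; the missing cells are filled with an arbitrary state.\<close>

lemma determines_unique:
  assumes "determines N \<delta> c g q" and "determines N \<delta> c g q'"
  shows "q = q'"
proof -
  define d where "d h = (if h \<in> lshift N g then Some (case c h of Some v \<Rightarrow> v | None \<Rightarrow> undefined)
    else None)" for h
  have "dom d = lshift N g"
    unfolding d_def by (auto split: if_splits)
  moreover have "d |` dom (local_conf N c g) = local_conf N c g"
    unfolding d_def local_conf_def by (rule ext) (auto simp: restrict_map_def dom_def)
  ultimately have "\<delta> (conf_shift d g) = q" and "\<delta> (conf_shift d g) = q'"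
    using assms unfolding determines_def by blast+
  then show ?thesis by simp
qed

lemma det_val_eqI: "determines N \<delta> c g q \<Longrightarrow> det_val N \<delta> c g = q"
  unfolding det_val_def by (blast intro: the_equality determines_unique)

lemma determines_local_conf_iff:
  "determines N \<delta> (local_conf N c g) g q \<longleftrightarrow> determines N \<delta> c g q"
  unfolding determines_def local_conf_idem ..

lemma fine_trans_eq_Some_iff:
  "fine_trans N \<delta> c g = Some q \<longleftrightarrow> determines N \<delta> c g q"
  unfolding fine_trans_def det_def by (auto dest: det_val_eqI)

lemma sub_delta_eq_Some_iff:
  "sub_delta N \<delta> (g, c) h = Some q \<longleftrightarrow> h = g \<and> determines N \<delta> c g q"
  unfolding sub_delta_def det_def by (auto dest: det_val_eqI)

lemma fine_trans_mono:
  fixes N :: "'g::group_add set" and \<delta> :: "('g \<rightharpoonup> 'q) \<Rightarrow> 'q"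
  shows "monotone_on UNIV (\<subseteq>\<^sub>m) (\<subseteq>\<^sub>m) (fine_trans N \<delta>)"
proof (rule monotone_onI)
  fix c c' :: "'g \<rightharpoonup> 'q"
  assume "c \<subseteq>\<^sub>m c'"
  then show "fine_trans N \<delta> c \<subseteq>\<^sub>m fine_trans N \<delta> c'"
    by (intro map_leI) (simp add: fine_trans_eq_Some_iff determines_mono)
qed

lemma sub_delta_mono:
  fixes N :: "'g::group_add set" and \<delta> :: "('g \<rightharpoonup> 'q) \<Rightarrow> 'q"
  shows "monotone_on (Sub N) sub_le (\<subseteq>\<^sub>m) (sub_delta N \<delta>)"
proof (rule monotone_onI)
  fix x y :: "'g \<times> ('g \<rightharpoonup> 'q)"
  assume "sub_le x y"
  then obtain g c c' where "x = (g, c)" and "y = (g, c')" and "c \<subseteq>\<^sub>m c'"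
    unfolding sub_le_def by (metis prod.collapse)
  then show "sub_delta N \<delta> x \<subseteq>\<^sub>m sub_delta N \<delta> y"
    by (intro map_leI) (auto simp: sub_delta_eq_Some_iff determines_mono)
qed

lemma sub_delta_le_fine_trans: "sub_delta N \<delta> x \<subseteq>\<^sub>m fine_trans N \<delta> (snd x)"
  by (cases x) (auto intro!: map_leI simp: sub_delta_eq_Some_iff fine_trans_eq_Some_iff)

lemma fine_trans_least:
  assumes "monotone_on UNIV (\<subseteq>\<^sub>m) (\<subseteq>\<^sub>m) f"
    and "\<And>x. x \<in> Sub N \<Longrightarrow> sub_delta N \<delta> x \<subseteq>\<^sub>m f (snd x)"
  shows "fine_trans N \<delta> c \<subseteq>\<^sub>m f c"
proof (rule map_leI)
  fix g q
  assume "fine_trans N \<delta> c g = Some q"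
  then have "sub_delta N \<delta> (g, local_conf N c g) g = Some q"
    by (simp add: fine_trans_eq_Some_iff sub_delta_eq_Some_iff determines_local_conf_iff)
  moreover have "sub_delta N \<delta> (g, local_conf N c g) \<subseteq>\<^sub>m f (local_conf N c g)"
    using assms(2)[OF local_conf_in_Sub] by simp
  moreover have "f (local_conf N c g) \<subseteq>\<^sub>m f c"
    using assms(1) local_conf_map_le by (blast dest: monotone_onD)
  ultimately show "f c g = Some q"
    by (blast dest: map_le_SomeD)
qed

theorem mainTheorem16:
  fixes N :: "'g::group_add set" and \<delta> :: "('g \<rightharpoonup> 'q::finite) \<Rightarrow> 'q"
  shows "is_left_Kan_ext (Sub N) sub_le UNIV map_le UNIV map_le snd (sub_delta N \<delta>) (fine_trans N \<delta>)"
proof -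
  have "monotone_on (Sub N) sub_le (\<subseteq>\<^sub>m) snd"
    by (rule monotone_onI) (simp add: sub_le_def)
  moreover have "\<forall>x\<in>Sub N. sub_delta N \<delta> x \<subseteq>\<^sub>m fine_trans N \<delta> (snd x)"
    by (simp add: sub_delta_le_fine_trans)
  moreover have "\<forall>f. monotone_on UNIV (\<subseteq>\<^sub>m) (\<subseteq>\<^sub>m) f
      \<and> (\<forall>x\<in>Sub N. sub_delta N \<delta> x \<subseteq>\<^sub>m f (snd x))
      \<longrightarrow> (\<forall>c. fine_trans N \<delta> c \<subseteq>\<^sub>m f c)"
    using fine_trans_least by blast
  ultimately show ?thesis
    unfolding is_left_Kan_ext_def using sub_delta_mono fine_trans_mono by blast
qed

end
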